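(* Let $\mathbf{w}$ be a finite set of words over $\Sigma$, $K=\{1,\dots,k\}$, and $\mathsf{A}=\langle \Sigma, K, S, S_0, \Delta, S_F\rangle$ an NAA with underlying NFA $\mathcal{A}$. For any $w\in\mathbf{w}$, any $m\in\{1,\dots,k\}$, any $i\in\{1,2,\dots,|w|-\ell_m\}$, and any $((w_1,i^1,j^1),\dots,(w_k,i^k,j^k))\in\mathcal{M}(\mathsf{A},\mathbf{w})$: if $\ell_m>0$, $w_{i+\ell_m-1}\notin \mathrm{Last}_m$, and $w_m=w$, then $i^m<i$ or $i^m\ge i+\Delta^m_{\mathrm{QS}}(w_{i+\ell_m})$.
   Context: An NAA is a tuple $\mathsf{A}=\langle \Sigma, K, S, S_0, \Delta, S_F\rangle$ with finite alphabet $\Sigma$, directions $K=\{1,\dots,k\}$, finite states $S$, initial states $S_0\subseteq S$, accepting states $S_F\subseteq S$ and transitions $\Delta\subseteq S\times\Sigma\times K\times S$. Its underlying NFA $\mathcal{A}$ is the NFA over alphabet $\Sigma\times K$ with the same states, initial/accepting states and transitions; $\mathcal{L}(\mathcal{A})$ is its language. For $\tilde w\in(\Sigma\times K)^*$ and $x\in K$, $\pi_x(\tilde w)\in\Sigma^*$ deletes letters $(a,x')$ with $x'\ne x$ and replaces each $(a,x)$ by $a$; $\pi_x(L)=\{\pi_x(\tilde w)\mid \tilde w\in L\}$. $\mathsf{A}$ accepts $(w_1,\dots,w_k)$ if some $\tilde w\in\mathcal{L}(\mathcal{A})$ has $\pi_x(\tilde w)=w_x$ for all $x$; $\mathfrak{L}(\mathsf{A})$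 is the set of accepted tuples. For $w=\sigma_1\cdots\sigma_n$, $w_i=\sigma_i$ is its $i$-th letter and $w[i..j]=\sigma_i\cdots\sigma_j$. The match set is $\mathcal{M}(\mathsf{A},\mathbf{w})=\{((w_1,i^1,j^1),\dots,(w_k,i^k,j^k))\in(\mathbf{w}\times\mathbb{N}\times\mathbb{N})^k\mid (w_1[i^1..j^1],\dots,w_k[i^k..j^k])\in\mathfrak{L}(\mathsf{A})\}$. QS-style skip values (computed for $\mathcal{A}$): $\ell=\min_{\tilde w\in\mathcal{L}(\mathcal{A})}|\tilde w|$; for $m\in K$, $\ell_m=\min_{\tilde w\in\mathcal{L}(\mathcal{A})}|\pi_m(\tilde w[1..\ell])|$; $\mathrm{Last}_m\subseteq\Sigma$ is the set of $\ell_m$-th letters of words in $\pi_m(\mathcal{L}(\mathcal{A}))$; for $\sigma\in\Sigma$, $\Delta^m_{\mathrm{QS}}(\sigma)=\min\{\ell_m+1,\ \min\{i\in\{1,\dots,\ell_m\}\mid \exists \tilde w\in\mathcal{L}(\mathcal{A}).\ \text{the }(\ell_m+1-i)\text{-th letter of }\pi_m(\tilde w)\text{ is }\sigma\}\}$. *)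

theory Defs
  imports Main
begin

text \<open>The underlying NFA reads words over (letter, direction) pairs.\<close>

definition naa_wf ::
  "'a set \<Rightarrow> nat \<Rightarrow> 's set \<Rightarrow> 's set \<Rightarrow> ('s \<times> 'a \<times> nat \<times> 's) set \<Rightarrow> 's set \<Rightarrow> bool" where
  "naa_wf Sig k S S0 Delta SF \<longleftrightarrow>
     finite Sig \<and> finite S \<and> S0 \<subseteq> S \<and> SF \<subseteq> S \<and>
     Delta \<subseteq> S \<times> Sig \<times> {1..k} \<times> S"

fun nfa_steps :: "('s \<times> 'a \<times> nat \<times> 's) set \<Rightarrow> 's \<Rightarrow> ('a \<times> nat) list \<Rightarrow> 's \<Rightarrow> bool" where
  "nfa_steps Delta q [] q' \<longleftrightarrow> q' = q"
| "nfa_steps Delta q ((a, x) # w) q' \<longleftrightarrow>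
     (\<exists>p. (q, a, x, p) \<in> Delta \<and> nfa_steps Delta p w q')"

definition nfa_lang ::
  "'s set \<Rightarrow> ('s \<times> 'a \<times> nat \<times> 's) set \<Rightarrow> 's set \<Rightarrow> ('a \<times> nat) list set" where
  "nfa_lang S0 Delta SF = {w. \<exists>q0\<in>S0. \<exists>qf\<in>SF. nfa_steps Delta q0 w qf}"

definition proj :: "nat \<Rightarrow> ('a \<times> nat) list \<Rightarrow> 'a list" where
  "proj x w = map fst (filter (\<lambda>p. snd p = x) w)"

text \<open>Accepted tuples: a tuple (w_1,...,w_k) is a function u on {1..k}.\<close>
definition naa_accepts ::
  "nat \<Rightarrow> 's set \<Rightarrow> ('s \<times> 'a \<times> nat \<times> 's) set \<Rightarrow> 's set \<Rightarrow> (nat \<Rightarrow> 'a list) \<Rightarrow> bool" where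
  "naa_accepts k S0 Delta SF u \<longleftrightarrow>
     (\<exists>w\<in>nfa_lang S0 Delta SF. \<forall>x\<in>{1..k}. proj x w = u x)"

text \<open>1-indexed infix w[i..j] = sigma_i ... sigma_j (empty if j < i; truncated at |w|).\<close>
definition infix_of :: "'a list \<Rightarrow> nat \<Rightarrow> nat \<Rightarrow> 'a list" where
  "infix_of w i j = drop (i - 1) (take j w)"

text \<open>Match set M(A, W): tuples are functions t on {1..k}, t x = (w_x, i^x, j^x).\<close>
definition match_set ::
  "nat \<Rightarrow> 's set \<Rightarrow> ('s \<times> 'a \<times> nat \<times> 's) set \<Rightarrow> 's set \<Rightarrow> 'a list set
    \<Rightarrow> (nat \<Rightarrow> 'a list \<times> nat \<times> nat) set" where
  "match_set k S0 Delta SF W =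
     {t. (\<forall>x\<in>{1..k}. fst (t x) \<in> W) \<and>
         naa_accepts k S0 Delta SF
           (\<lambda>x. infix_of (fst (t x)) (fst (snd (t x))) (snd (snd (t x))))}"

definition qs_ell :: "('a \<times> nat) list set \<Rightarrow> nat" where
  "qs_ell L = (LEAST n. \<exists>w\<in>L. length w = n)"

definition qs_ell_m :: "('a \<times> nat) list set \<Rightarrow> nat \<Rightarrow> nat" where
  "qs_ell_m L m = (LEAST n. \<exists>w\<in>L. length (proj m (take (qs_ell L) w)) = n)"

definition qs_last :: "('a \<times> nat) list set \<Rightarrow> nat \<Rightarrow> 'a set" where
  "qs_last L m = {u ! (qs_ell_m L m - 1) | u. u \<in> proj m ` L \<and> qs_ell_m L m \<le> length u}"

definition qs_shift :: "('a \<times> nat) list set \<Rightarrow> nat \<Rightarrow> 'a \<Rightarrow> nat" where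
  "qs_shift L m \<sigma> = Min (insert (qs_ell_m L m + 1)
     {i \<in> {1..qs_ell_m L m}. \<exists>w\<in>L. qs_ell_m L m + 1 - i \<le> length (proj m w) \<and>
                                   proj m w ! (qs_ell_m L m - i) = \<sigma>})"

end

theory Submission
  imports Defs
begin

text \<open>Suppose the m-th component of a match starts at a with i \<le> a. A word of the NFA
  language then projects in direction m onto the infix of w starting at a, and this
  projection has length at least l_m. If a = i, its l_m-th letter is w_(i+l_m-1),
  contradicting the hypothesis on Last_m. If a = i + d with 1 \<le> d \<le> l_m, its
  (l_m+1-d)-th letter is \<sigma> = w_(i+l_m), so d competes in the minimum defining the
  shift of \<sigma>, i.e. a \<ge> i + shift(\<sigma>). Positions are 1-based as in the paper, list
  indices 0-based: w_n is w ! (n - 1).\<close>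

lemma length_proj_take_le: "length (proj m (take n x)) \<le> length (proj m x)"
proof -
  have "proj m x = proj m (take n x) @ proj m (drop n x)"
    unfolding proj_def by (metis append_take_drop_id filter_append map_append)
  then show ?thesis by (metis le_add1 length_append)
qed

lemma qs_ell_m_le_length_proj:
  assumes "x \<in> L"
  shows "qs_ell_m L m \<le> length (proj m x)"
proof -
  have "qs_ell_m L m \<le> length (proj m (take (qs_ell L) x))"
    unfolding qs_ell_m_def using assms by (intro Least_le) blast
  then show ?thesis using length_proj_take_le le_trans by blast
qed

lemma proj_nth_in_qs_last:
  assumes "x \<in> L"
  shows "proj m x ! (qs_ell_m L m - 1) \<in> qs_last L m"
  unfolding qs_last_def using assms qs_ell_m_le_length_proj by blast

lemma qs_shift_le_Suc_qs_ell_m: "qs_shift L m \<sigma> \<le> qs_ell_m L m + 1"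
  unfolding qs_shift_def by simp

lemma qs_shift_le:
  assumes "d \<in> {1..qs_ell_m L m}" and "x \<in> L"
    and "qs_ell_m L m + 1 - d \<le> length (proj m x)"
    and "proj m x ! (qs_ell_m L m - d) = \<sigma>"
  shows "qs_shift L m \<sigma> \<le> d"
  unfolding qs_shift_def using assms by (intro Min_le) auto

lemma nth_infix_of:
  assumes "p < length (infix_of w a j)"
  shows "infix_of w a j ! p = w ! (a - 1 + p)"
proof -
  have "a - 1 + p < length (take j w)"
    using assms unfolding infix_of_def by (simp add: min_def split: if_splits)
  then show ?thesis unfolding infix_of_def by (simp add: nth_drop)
qed

lemma match_set_proj:
  assumes "t \<in> match_set k S0 Delta SF W" and "m \<in> {1..k}"
  shows "\<exists>x\<in>nfa_lang S0 Delta SF.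
           proj m x = infix_of (fst (t m)) (fst (snd (t m))) (snd (snd (t m)))"
  using assms unfolding match_set_def naa_accepts_def by blast

lemma qs_last_if_match_at:
  assumes "x \<in> L" and "proj m x = infix_of w i j"
    and "0 < qs_ell_m L m" and "1 \<le> i"
  shows "w ! (i + qs_ell_m L m - 2) \<in> qs_last L m"
proof -
  have "qs_ell_m L m - 1 < length (infix_of w i j)"
    using qs_ell_m_le_length_proj[OF assms(1), of m] assms(2,3) by simp
  then have "proj m x ! (qs_ell_m L m - 1) = w ! (i - 1 + (qs_ell_m L m - 1))"
    using assms(2) nth_infix_of by metis
  also have "i - 1 + (qs_ell_m L m - 1) = i + qs_ell_m L m - 2"
    using assms(3,4) by linarith
  finally have "proj m x ! (qs_ell_m L m - 1) = w ! (i + qs_ell_m L m - 2)" .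
  then show ?thesis using proj_nth_in_qs_last[OF assms(1)] by metis
qed

lemma qs_shift_le_if_match_at:
  assumes "x \<in> L" and "proj m x = infix_of w (i + d) j"
    and "1 \<le> d" and "d \<le> qs_ell_m L m" and "1 \<le> i"
  shows "qs_shift L m (w ! (i + qs_ell_m L m - 1)) \<le> d"
proof (rule qs_shift_le[OF _ assms(1)])
  have len: "qs_ell_m L m \<le> length (proj m x)"
    using qs_ell_m_le_length_proj[OF assms(1)] .
  show "d \<in> {1..qs_ell_m L m}" using assms(3,4) by simp
  show "qs_ell_m L m + 1 - d \<le> length (proj m x)" using len assms(3) by linarith
  have "qs_ell_m L m - d < length (proj m x)"
    using len assms(3,4) by linarith
  then have "proj m x ! (qs_ell_m L m - d) = w ! (i + d - 1 + (qs_ell_m L m - d))"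
    using assms(2) nth_infix_of by metis
  also have "i + d - 1 + (qs_ell_m L m - d) = i + qs_ell_m L m - 1"
    using assms(3-5) by linarith
  finally show "proj m x ! (qs_ell_m L m - d) = w ! (i + qs_ell_m L m - 1)" .
qed

lemma match_start_outside_qs_skip:
  assumes "x \<in> L" and "proj m x = infix_of w a j"
    and "0 < qs_ell_m L m" and "1 \<le> i"
    and "w ! (i + qs_ell_m L m - 2) \<notin> qs_last L m"
  shows "a < i \<or> i + qs_shift L m (w ! (i + qs_ell_m L m - 1)) \<le> a"
proof (rule ccontr)
  let ?shift = "qs_shift L m (w ! (i + qs_ell_m L m - 1))"
  assume "\<not> ?thesis"
  then have "i \<le> a" and below_shift: "a < i + ?shift" by auto
  moreover have "a \<noteq> i" using qs_last_if_match_at assms by metis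
  moreover have "?shift \<le> qs_ell_m L m + 1" by (rule qs_shift_le_Suc_qs_ell_m)
  ultimately have "a = i + (a - i)" "1 \<le> a - i" "a - i \<le> qs_ell_m L m" by linarith+
  then have "?shift \<le> a - i" using qs_shift_le_if_match_at assms by metis
  with below_shift \<open>i \<le> a\<close> show False by linarith
qed

theorem theorem2:
  fixes Sig :: "'a set" and k :: nat and S :: "'s set" and S0 SF :: "'s set"
    and Delta :: "('s \<times> 'a \<times> nat \<times> 's) set" and W :: "'a list set"
    and w :: "'a list" and m i :: nat and t :: "nat \<Rightarrow> 'a list \<times> nat \<times> nat"
  assumes "naa_wf Sig k S S0 Delta SF"
    and "finite W" and "\<forall>v\<in>W. set v \<subseteq> Sig"
    and "w \<in> W"
    and "m \<in> {1..k}"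
    and "i \<in> {1..length w - qs_ell_m (nfa_lang S0 Delta SF) m}"
    and "t \<in> match_set k S0 Delta SF W"
    and "qs_ell_m (nfa_lang S0 Delta SF) m > 0"
    and "w ! (i + qs_ell_m (nfa_lang S0 Delta SF) m - 2) \<notin> qs_last (nfa_lang S0 Delta SF) m"
    and "fst (t m) = w"
  shows "fst (snd (t m)) < i \<or>
         fst (snd (t m)) \<ge> i + qs_shift (nfa_lang S0 Delta SF) m
                                (w ! (i + qs_ell_m (nfa_lang S0 Delta SF) m - 1))"
proof -
  obtain x where "x \<in> nfa_lang S0 Delta SF"
    and "proj m x = infix_of w (fst (snd (t m))) (snd (snd (t m)))"
    using match_set_proj[OF assms(7,5)] assms(10) by auto
  moreover have "1 \<le> i" using assms(6) by simp
  ultimately show ?thesis using match_start_outside_qs_skip assms(8,9) by blast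
qed

end
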